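(* Let $M^2$ be a minimal surface in $\mathbb R^4$ and let $\{x,y,n_1,n_2\}$ be a positively oriented orthonormal frame field with $x,y$ tangent and $n_1,n_2$ normal to $M^2$. Then the invariant $\varkappa$ equals the curvature of the normal connection of $M^2$: $$\varkappa=g\big(R^\perp(x,y)n_2,\,n_1\big),$$ where $D$ is the normal connection of $M^2$ and $R^\perp(x,y)=D_xD_y-D_yD_x-D_{[x,y]}$.
   Context: $\mathbb R^4$ carries the standard metric $g=\langle\cdot,\cdot\rangle$ and flat connection $\nabla'$; everything is smooth and local. A regular surface is $M^2: z=z(u,v)$, $(u,v)\in\mathcal D\subset\mathbb R^2$, with $E=\langle z_u,z_u\rangle$, $F=\langle z_u,z_v\rangle$, $G=\langle z_v,z_v\rangle$, $W=\sqrt{EG-F^2}$, and second fundamental form $\sigma$ (normal part of $\nabla'$). Minimal means the mean curvature vector $H=\tfrac12(\sigma(x,x)+\sigma(y,y))$ ($x,y$ an orthonormal tangent basis) vanishes. For an orthonormal normal frame $\{e_1,e_2\}$ such that $(z_u,z_v,e_1,e_2)$ is positively oriented, write $\sigma(z_u,z_u)=c_{11}^1e_1+c_{11}^2e_2$, $\sigma(z_u,z_v)=c_{12}^1e_1+c_{12}^2e_2$, $\sigma(z_v,z_v)=c_{22}^1e_1+c_{22}^2e_2$, and set $\Delta_1=c_{11}^1c_{12}^2-c_{12}^1c_{11}^2$, $\Delta_2=c_{11}^1c_{22}^2-c_{22}^1c_{11}^2$, $\Delta_3=c_{12}^1c_{22}^2-c_{22}^1c_{12}^2$, $L=2\Delta_1/W$,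 $M=\Delta_2/W$, $N=2\Delta_3/W$. The invariants of $M^2$ are $k=\frac{LN-M^2}{EG-F^2}$ and $\varkappa=\frac{EN+GL-2FM}{2(EG-F^2)}$. The normal connection is $D_XV=(\nabla'_XV)^\perp$ for normal fields $V$. *)

theory Defs
  imports "HOL-Analysis.Analysis"
begin

type_synonym R4 = "real^4"

definition pu :: "(real \<times> real \<Rightarrow> 'a::real_normed_vector) \<Rightarrow> real \<times> real \<Rightarrow> 'a" where
  "pu f = (\<lambda>q. frechet_derivative f (at q) (1, 0))"
definition pv :: "(real \<times> real \<Rightarrow> 'a::real_normed_vector) \<Rightarrow> real \<times> real \<Rightarrow> 'a" where
  "pv f = (\<lambda>q. frechet_derivative f (at q) (0, 1))"

fun iter_partial :: "bool list \<Rightarrow> (real \<times> real \<Rightarrow> 'a::real_normed_vector) \<Rightarrow> real \<times> real \<Rightarrow> 'a" where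
  "iter_partial [] f = f"
| "iter_partial (b # bs) f = (if b then pu else pv) (iter_partial bs f)"

definition smooth_on :: "(real \<times> real) set \<Rightarrow> (real \<times> real \<Rightarrow> 'a::real_normed_vector) \<Rightarrow> bool" where
  "smooth_on D f \<longleftrightarrow> (\<forall>bs. \<forall>q\<in>D. iter_partial bs f differentiable (at q))"

definition EE :: "(real \<times> real \<Rightarrow> R4) \<Rightarrow> real \<times> real \<Rightarrow> real" where
  "EE z q = pu z q \<bullet> pu z q"
definition FF :: "(real \<times> real \<Rightarrow> R4) \<Rightarrow> real \<times> real \<Rightarrow> real" where
  "FF z q = pu z q \<bullet> pv z q"
definition GG :: "(real \<times> real \<Rightarrow> R4) \<Rightarrow> real \<times> real \<Rightarrow> real" where
  "GG z q = pv z q \<bullet> pv z q"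
definition WW :: "(real \<times> real \<Rightarrow> R4) \<Rightarrow> real \<times> real \<Rightarrow> real" where
  "WW z q = sqrt (EE z q * GG z q - (FF z q)^2)"

definition regular_surface :: "(real \<times> real) set \<Rightarrow> (real \<times> real \<Rightarrow> R4) \<Rightarrow> bool" where
  "regular_surface D z \<longleftrightarrow> open D \<and> smooth_on D z \<and>
     (\<forall>q\<in>D. EE z q * GG z q - (FF z q)^2 > 0)"

definition normal_part :: "(real \<times> real \<Rightarrow> R4) \<Rightarrow> real \<times> real \<Rightarrow> R4 \<Rightarrow> R4" where
  "normal_part z q w = (THE n. n \<bullet> pu z q = 0 \<and> n \<bullet> pv z q = 0 \<and> w - n \<in> span {pu z q, pv z q})"

text \<open>Second fundamental form on coordinate vectors: sigma(z_u,z_u), sigma(z_u,z_v), sigma(z_v,z_v).\<close>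
definition sigma11 :: "(real \<times> real \<Rightarrow> R4) \<Rightarrow> real \<times> real \<Rightarrow> R4" where
  "sigma11 z q = normal_part z q (pu (pu z) q)"
definition sigma12 :: "(real \<times> real \<Rightarrow> R4) \<Rightarrow> real \<times> real \<Rightarrow> R4" where
  "sigma12 z q = normal_part z q (pu (pv z) q)"
definition sigma22 :: "(real \<times> real \<Rightarrow> R4) \<Rightarrow> real \<times> real \<Rightarrow> R4" where
  "sigma22 z q = normal_part z q (pv (pv z) q)"

text \<open>sigma(a z_u + b z_v, c z_u + d z_v), by bilinearity.\<close>
definition sigma :: "(real \<times> real \<Rightarrow> R4) \<Rightarrow> real \<times> real \<Rightarrow> real \<times> real \<Rightarrow> real \<times> real \<Rightarrow> R4" where
  "sigma z q ab cd = (fst ab * fst cd) *\<^sub>R sigma11 z q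
      + (fst ab * snd cd + snd ab * fst cd) *\<^sub>R sigma12 z q
      + (snd ab * snd cd) *\<^sub>R sigma22 z q"

definition tvec :: "(real \<times> real \<Rightarrow> R4) \<Rightarrow> real \<times> real \<Rightarrow> real \<times> real \<Rightarrow> R4" where
  "tvec z q ab = fst ab *\<^sub>R pu z q + snd ab *\<^sub>R pv z q"

definition minimal_surface :: "(real \<times> real) set \<Rightarrow> (real \<times> real \<Rightarrow> R4) \<Rightarrow> bool" where
  "minimal_surface D z \<longleftrightarrow> (\<forall>q\<in>D. \<forall>ab cd.
      tvec z q ab \<bullet> tvec z q ab = 1 \<and> tvec z q cd \<bullet> tvec z q cd = 1 \<and> tvec z q ab \<bullet> tvec z q cd = 0
      \<longrightarrow> (1/2) *\<^sub>R (sigma z q ab ab + sigma z q cd cd) = 0)"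

text \<open>The invariants k and kappa, computed with a normal frame e1, e2 at z(q).\<close>
definition cc :: "(real \<times> real \<Rightarrow> R4) \<Rightarrow> real \<times> real \<Rightarrow> R4 \<Rightarrow> R4 \<Rightarrow> nat \<Rightarrow> nat \<Rightarrow> nat \<Rightarrow> real" where
  "cc z q e1 e2 i j k =
     (let s = (if i = 1 \<and> j = 1 then sigma11 z q else if i = 2 \<and> j = 2 then sigma22 z q else sigma12 z q)
      in s \<bullet> (if k = 1 then e1 else e2))"

definition Delta1 where "Delta1 z q e1 e2 = cc z q e1 e2 1 1 1 * cc z q e1 e2 1 2 2 - cc z q e1 e2 1 2 1 * cc z q e1 e2 1 1 2"
definition Delta2 where "Delta2 z q e1 e2 = cc z q e1 e2 1 1 1 * cc z q e1 e2 2 2 2 - cc z q e1 e2 2 2 1 * cc z q e1 e2 1 1 2"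
definition Delta3 where "Delta3 z q e1 e2 = cc z q e1 e2 1 2 1 * cc z q e1 e2 2 2 2 - cc z q e1 e2 2 2 1 * cc z q e1 e2 1 2 2"

definition LL where "LL z q e1 e2 = 2 * Delta1 z q e1 e2 / WW z q"
definition MM where "MM z q e1 e2 = Delta2 z q e1 e2 / WW z q"
definition NN where "NN z q e1 e2 = 2 * Delta3 z q e1 e2 / WW z q"

definition kinv where
  "kinv z q e1 e2 = (LL z q e1 e2 * NN z q e1 e2 - (MM z q e1 e2)^2) / (EE z q * GG z q - (FF z q)^2)"
definition varkappa where
  "varkappa z q e1 e2 = (EE z q * NN z q e1 e2 + GG z q * LL z q e1 e2 - 2 * FF z q * MM z q e1 e2)
        / (2 * (EE z q * GG z q - (FF z q)^2))"

definition pos_oriented :: "R4 \<Rightarrow> R4 \<Rightarrow> R4 \<Rightarrow> R4 \<Rightarrow> bool" where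
  "pos_oriented a b c d \<longleftrightarrow> det (vector [a, b, c, d] :: real^4^4) > 0"

definition adapted_normal_frame :: "(real \<times> real \<Rightarrow> R4) \<Rightarrow> real \<times> real \<Rightarrow> R4 \<Rightarrow> R4 \<Rightarrow> bool" where
  "adapted_normal_frame z q e1 e2 \<longleftrightarrow>
     e1 \<bullet> e1 = 1 \<and> e2 \<bullet> e2 = 1 \<and> e1 \<bullet> e2 = 0 \<and>
     e1 \<bullet> pu z q = 0 \<and> e1 \<bullet> pv z q = 0 \<and> e2 \<bullet> pu z q = 0 \<and> e2 \<bullet> pv z q = 0 \<and>
     pos_oriented (pu z q) (pv z q) e1 e2"

text \<open>Vector fields on M are maps D \<rightarrow> R^4 (ambient-valued). For a tangent field X, the
  coordinate components (a,b) with X = a z_u + b z_v, and the derivative of any field f in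
  direction X: X(f) = a f_u + b f_v (= flat connection nabla'_X f for R^4-valued f).\<close>
definition tcoords :: "(real \<times> real \<Rightarrow> R4) \<Rightarrow> (real \<times> real \<Rightarrow> R4) \<Rightarrow> real \<times> real \<Rightarrow> real \<times> real" where
  "tcoords z X q = (THE ab. X q = tvec z q ab)"

definition dirder :: "(real \<times> real \<Rightarrow> R4) \<Rightarrow> (real \<times> real \<Rightarrow> R4) \<Rightarrow> (real \<times> real \<Rightarrow> 'a::real_normed_vector)
    \<Rightarrow> real \<times> real \<Rightarrow> 'a" where
  "dirder z X f q = fst (tcoords z X q) *\<^sub>R pu f q + snd (tcoords z X q) *\<^sub>R pv f q"

definition lie_bracket :: "(real \<times> real \<Rightarrow> R4) \<Rightarrow> (real \<times> real \<Rightarrow> R4) \<Rightarrow> (real \<times> real \<Rightarrow> R4) \<Rightarrow> real \<times> real \<Rightarrow> R4" where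
  "lie_bracket z X Y q =
     (dirder z X (\<lambda>r. fst (tcoords z Y r)) q - dirder z Y (\<lambda>r. fst (tcoords z X r)) q) *\<^sub>R pu z q
   + (dirder z X (\<lambda>r. snd (tcoords z Y r)) q - dirder z Y (\<lambda>r. snd (tcoords z X r)) q) *\<^sub>R pv z q"

definition normal_conn :: "(real \<times> real \<Rightarrow> R4) \<Rightarrow> (real \<times> real \<Rightarrow> R4) \<Rightarrow> (real \<times> real \<Rightarrow> R4) \<Rightarrow> real \<times> real \<Rightarrow> R4" where
  "normal_conn z X V = (\<lambda>q. normal_part z q (dirder z X V q))"

definition normal_curv :: "(real \<times> real \<Rightarrow> R4) \<Rightarrow> (real \<times> real \<Rightarrow> R4) \<Rightarrow> (real \<times> real \<Rightarrow> R4)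
    \<Rightarrow> (real \<times> real \<Rightarrow> R4) \<Rightarrow> real \<times> real \<Rightarrow> R4" where
  "normal_curv z X Y V q = normal_conn z X (normal_conn z Y V) q - normal_conn z Y (normal_conn z X V) q
      - normal_conn z (lie_bracket z X Y) V q"

end

theory Submission
  imports Defs
begin

text \<open>
  The invariant varkappa is built from the second fundamental form in an arbitrary positively
  oriented normal frame e1, e2, whereas the normal curvature g(R(x,y)n2, n1) is built from the
  moving frame x, y, n1, n2. Write x \<and> y = d z_u \<and> z_v. The proof shows that both sides equal
  sgn(d) times varkappa computed in the frame n1, n2:

  (1) Replacing n1, n2 by e1, e2 multiplies the Delta_i, hence varkappa, by the determinant eps
      of the change of frame (varkappa_frame_change); since both frames are positively oriented,
      eps = sgn d (frame_change_sign).
  (2) Since D_X n2 = omega(X) n1 for the connection form omega = g(D n2, n1), the normal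
      curvature is the exterior derivative of omega evaluated on x, y, i.e.
      d (g(n2_v, n1_u) - g(n2_u, n1_v)) after cancelling mixed second derivatives; the
      Weingarten relations and d^2 (EG - F^2) = 1 turn this into sgn(d) times varkappa in the
      frame n1, n2 (normal_curvature_eq_varkappa).

  The identity holds for every regular surface.
\<close>

definition partial_along :: "('a::real_normed_vector \<Rightarrow> 'b::real_normed_vector) \<Rightarrow> 'a \<Rightarrow> 'a \<Rightarrow> 'b" where
  "partial_along f v q = frechet_derivative f (at q) v"

lemma partial_along_has_derivative:
  "(f has_derivative f') (at q) \<Longrightarrow> partial_along f v q = f' v"
  unfolding partial_along_def by (metis frechet_derivative_at)

lemma partial_along_works:
  "f differentiable at q \<Longrightarrow> (f has_derivative (\<lambda>v. partial_along f v q)) (at q)"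
  unfolding partial_along_def by (simp add: frechet_derivative_works[symmetric] eta_contract_eq)

lemma pu_eq_partial_along: "pu f = partial_along f (1, 0)"
  by (simp add: pu_def partial_along_def fun_eq_iff)

lemma pv_eq_partial_along: "pv f = partial_along f (0, 1)"
  by (simp add: pv_def partial_along_def fun_eq_iff)

lemma partial_along_cong:
  assumes "open S" "q \<in> S" "\<And>r. r \<in> S \<Longrightarrow> f r = g r"
  shows "partial_along f v q = partial_along g v q"
proof -
  have "(f has_derivative f') (at q) \<longleftrightarrow> (g has_derivative f') (at q)" for f'
    using has_derivative_transform_within_open assms by metis
  then show ?thesis unfolding partial_along_def frechet_derivative_def by simp
qed

lemma differentiable_cong:
  assumes "open S" "q \<in> S" "\<And>r. r \<in> S \<Longrightarrow> f r = g r" "f differentiable at q"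
  shows "g differentiable at q"
  using assms has_derivative_transform_within_open unfolding differentiable_def by metis

lemma pu_cong: "open S \<Longrightarrow> q \<in> S \<Longrightarrow> (\<And>r. r \<in> S \<Longrightarrow> f r = g r) \<Longrightarrow> pu f q = pu g q"
  unfolding pu_eq_partial_along by (rule partial_along_cong)

lemma pv_cong: "open S \<Longrightarrow> q \<in> S \<Longrightarrow> (\<And>r. r \<in> S \<Longrightarrow> f r = g r) \<Longrightarrow> pv f q = pv g q"
  unfolding pv_eq_partial_along by (rule partial_along_cong)

lemma partial_along_add:
  "f differentiable at q \<Longrightarrow> g differentiable at q \<Longrightarrow>
    partial_along (\<lambda>r. f r + g r) v q = partial_along f v q + partial_along g v q"
  by (rule partial_along_has_derivative[OF has_derivative_add[OF partial_along_works partial_along_works]])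

lemma partial_along_mult:
  fixes f g :: "'a::real_normed_vector \<Rightarrow> real"
  shows "f differentiable at q \<Longrightarrow> g differentiable at q \<Longrightarrow>
    partial_along (\<lambda>r. f r * g r) v q = f q * partial_along g v q + partial_along f v q * g q"
  by (rule partial_along_has_derivative[OF has_derivative_mult[OF partial_along_works partial_along_works]])

lemma partial_along_scaleR:
  fixes f :: "'a::real_normed_vector \<Rightarrow> real"
  shows "f differentiable at q \<Longrightarrow> g differentiable at q \<Longrightarrow>
    partial_along (\<lambda>r. f r *\<^sub>R g r) v q = f q *\<^sub>R partial_along g v q + partial_along f v q *\<^sub>R g q"
  by (rule partial_along_has_derivative[OF has_derivative_scaleR[OF partial_along_works partial_along_works]])

lemma partial_along_inner:
  "f differentiable at q \<Longrightarrow> g differentiable at q \<Longrightarrow>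
    partial_along (\<lambda>r. f r \<bullet> g r) v q = f q \<bullet> partial_along g v q + partial_along f v q \<bullet> g q"
  by (rule partial_along_has_derivative[OF has_derivative_inner[OF partial_along_works partial_along_works]])

lemma partial_along_const: "partial_along (\<lambda>r. c) v q = 0"
  by (rule partial_along_has_derivative[OF has_derivative_const])

lemmas partial_along_rules = partial_along_add partial_along_mult partial_along_scaleR
  partial_along_inner partial_along_const
lemmas pu_rules = partial_along_rules[where v="(1::real, 0::real)", folded pu_eq_partial_along]
lemmas pv_rules = partial_along_rules[where v="(0::real, 1::real)", folded pv_eq_partial_along]

lemma has_derivative_along_line:
  assumes "f differentiable at (c + s *\<^sub>R v)"
  shows "((\<lambda>t. f (c + t *\<^sub>R v)) has_derivative (\<lambda>t. t *\<^sub>R partial_along f v (c + s *\<^sub>R v))) (at s)"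
proof -
  have line: "((\<lambda>t. c + t *\<^sub>R v) has_derivative (\<lambda>t. t *\<^sub>R v)) (at s)"
    by (auto intro!: derivative_eq_intros)
  have lin: "linear (\<lambda>w. partial_along f w (c + s *\<^sub>R v))"
    using partial_along_works[OF assms] has_derivative_linear by blast
  show ?thesis
    using diff_chain_at[OF line partial_along_works[OF assms]] linear_scale[OF lin]
    by (simp add: o_def)
qed

lemma norm_combination_le:
  fixes v w :: "'a::real_normed_vector"
  assumes "0 \<le> s" "s \<le> h" "0 \<le> t" "t \<le> h"
  shows "norm (s *\<^sub>R v + t *\<^sub>R w) \<le> h * (norm v + norm w)"
proof -
  have "norm (s *\<^sub>R v + t *\<^sub>R w) \<le> s * norm v + t * norm w"
    using norm_triangle_ineq[of "s *\<^sub>R v" "t *\<^sub>R w"] assms by simp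
  also have "\<dots> \<le> h * norm v + h * norm w"
    using assms by (intro add_mono mult_right_mono) auto
  finally show ?thesis by (simp add: algebra_simps)
qed

lemma mixed_difference_mean_value:
  fixes f :: "'a::real_normed_vector \<Rightarrow> real"
  assumes h: "0 < h"
    and df: "\<And>s t. 0 \<le> s \<Longrightarrow> s \<le> h \<Longrightarrow> 0 \<le> t \<Longrightarrow> t \<le> h \<Longrightarrow> f differentiable at (p + (s *\<^sub>R v + t *\<^sub>R w))"
  obtains x where "0 < x" "x < h"
    "f (p + h *\<^sub>R v + h *\<^sub>R w) - f (p + h *\<^sub>R w) - f (p + h *\<^sub>R v) + f p
      = h * (partial_along f v (p + h *\<^sub>R w + x *\<^sub>R v) - partial_along f v (p + x *\<^sub>R v))"
proof -
  define \<phi> where "\<phi> = (\<lambda>s. f (p + h *\<^sub>R w + s *\<^sub>R v) - f (p + s *\<^sub>R v))"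
  have "\<exists>x\<in>{0<..<h}. \<phi> h - \<phi> 0 =
      (h - 0) *\<^sub>R (partial_along f v (p + h *\<^sub>R w + x *\<^sub>R v) - partial_along f v (p + x *\<^sub>R v))"
  proof (rule mvt_simple[of 0 h \<phi>
        "\<lambda>s t. t *\<^sub>R (partial_along f v (p + h *\<^sub>R w + s *\<^sub>R v) - partial_along f v (p + s *\<^sub>R v))"])
    show "0 < h" by (rule h)
    fix s assume s: "0 \<le> s" "s \<le> h"
    have "f differentiable at (p + h *\<^sub>R w + s *\<^sub>R v)" "f differentiable at (p + s *\<^sub>R v)"
      using df[OF s, of h] df[OF s, of 0] h by (simp_all add: add.assoc add.commute[of "h *\<^sub>R w"])
    then have "(\<phi> has_derivative (\<lambda>t. t *\<^sub>R partial_along f v (p + h *\<^sub>R w + s *\<^sub>R v)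
        - t *\<^sub>R partial_along f v (p + s *\<^sub>R v))) (at s)"
      unfolding \<phi>_def by (intro has_derivative_diff has_derivative_along_line)
    then show "(\<phi> has_derivative (\<lambda>t. t *\<^sub>R (partial_along f v (p + h *\<^sub>R w + s *\<^sub>R v)
        - partial_along f v (p + s *\<^sub>R v)))) (at s within {0..h})"
      by (simp add: has_derivative_at_withinI right_diff_distrib)
  qed
  moreover have "f (p + h *\<^sub>R v + h *\<^sub>R w) - f (p + h *\<^sub>R w) - f (p + h *\<^sub>R v) + f p = \<phi> h - \<phi> 0"
    unfolding \<phi>_def by (simp add: ac_simps)
  ultimately show ?thesis using that by auto
qed

text \<open>The second-order difference is h^2 times the derivative of the v-derivative in direction
  w, up to o(h^2): combine the mean value theorem with the linearisation of the v-derivative.\<close>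
lemma mixed_difference_estimate:
  fixes f :: "'a::real_normed_vector \<Rightarrow> real"
  assumes S: "open S" "p \<in> S" and df: "\<And>q. q \<in> S \<Longrightarrow> f differentiable at q"
    and dg: "partial_along f v differentiable at p" and e: "e > 0"
  shows "\<exists>d>0. \<forall>h. 0 < h \<and> h < d \<longrightarrow>
    \<bar>f (p + h *\<^sub>R v + h *\<^sub>R w) - f (p + h *\<^sub>R w) - f (p + h *\<^sub>R v) + f p
      - h\<^sup>2 * partial_along (partial_along f v) w p\<bar> \<le> e * h\<^sup>2 * (2 * norm v + norm w)"
proof -
  define g where "g = partial_along f v"
  define g' where "g' = (\<lambda>k. partial_along g k p)"
  have gder: "(g has_derivative g') (at p)"
    unfolding g'_def g_def by (rule partial_along_works[OF dg])
  have lin: "linear g'" using gder has_derivative_linear by blast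
  obtain r where r: "r > 0" "ball p r \<subseteq> S" using S openE by blast
  obtain d1 where d1: "d1 > 0" "\<And>y. norm (y - p) < d1 \<Longrightarrow> norm (g y - g p - g' (y - p)) \<le> e * norm (y - p)"
    using gder e unfolding has_derivative_at_alt by blast
  define d where "d = min r d1 / (norm v + norm w + 1)"
  have K: "norm v + norm w + 1 > 0" using norm_ge_zero[of v] norm_ge_zero[of w] by linarith
  have close: "norm (s *\<^sub>R v + t *\<^sub>R w) < min r d1"
    if "0 \<le> s" "s \<le> h" "0 \<le> t" "t \<le> h" "h < d" for s t h
  proof -
    have "0 \<le> h" using that by linarith
    then have "norm (s *\<^sub>R v + t *\<^sub>R w) \<le> h * (norm v + norm w + 1)"
      using norm_combination_le[OF that(1-4), of v w] by (simp add: algebra_simps)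
    also have "\<dots> < min r d1" using that K unfolding d_def by (simp add: less_divide_eq)
    finally show ?thesis .
  qed
  have dist_shift: "dist p (p + k) = norm k" for k :: 'a by (simp add: dist_norm)
  show ?thesis
  proof (intro exI[of _ d] conjI allI impI)
    show "d > 0" using r d1 K unfolding d_def by simp
    fix h assume h: "0 < h \<and> h < d"
    have "f differentiable at (p + (s *\<^sub>R v + t *\<^sub>R w))" if "0 \<le> s" "s \<le> h" "0 \<le> t" "t \<le> h" for s t
    proof -
      have "norm (s *\<^sub>R v + t *\<^sub>R w) < r" using close[where s=s and t=t and h=h] that h by simp
      then have "p + (s *\<^sub>R v + t *\<^sub>R w) \<in> S" using r(2) dist_shift by (auto simp: subset_iff)
      then show ?thesis by (rule df)
    qed
    then obtain x where x: "0 < x" "x < h" and mvt: "f (p + h *\<^sub>R v + h *\<^sub>R w) - f (p + h *\<^sub>R w)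
        - f (p + h *\<^sub>R v) + f p = h * (g (p + h *\<^sub>R w + x *\<^sub>R v) - g (p + x *\<^sub>R v))"
      using mixed_difference_mean_value[of h f p v w] h unfolding g_def by blast
    have lin_step: "g' (x *\<^sub>R v + h *\<^sub>R w) - g' (x *\<^sub>R v) = h * g' w"
      using linear_add[OF lin] linear_scale[OF lin] by simp
    have err1: "\<bar>g (p + h *\<^sub>R w + x *\<^sub>R v) - g p - g' (x *\<^sub>R v + h *\<^sub>R w)\<bar> \<le> e * norm (x *\<^sub>R v + h *\<^sub>R w)"
      using d1(2)[of "p + h *\<^sub>R w + x *\<^sub>R v"] close[where s=x and t=h and h=h] x h by (simp add: ac_simps)
    have err2: "\<bar>g (p + x *\<^sub>R v) - g p - g' (x *\<^sub>R v)\<bar> \<le> e * norm (x *\<^sub>R v)"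
      using d1(2)[of "p + x *\<^sub>R v"] close[where s=x and t=0 and h=h] x h by simp
    have "norm (x *\<^sub>R v + h *\<^sub>R w) + norm (x *\<^sub>R v) \<le> 2 * (x * norm v) + h * norm w"
      using norm_triangle_ineq[of "x *\<^sub>R v" "h *\<^sub>R w"] x h by simp
    also have "\<dots> \<le> h * (2 * norm v + norm w)"
      using x mult_right_mono[of x h "norm v"] by (simp add: algebra_simps)
    finally have "norm (x *\<^sub>R v + h *\<^sub>R w) + norm (x *\<^sub>R v) \<le> h * (2 * norm v + norm w)" .
    then have "e * (norm (x *\<^sub>R v + h *\<^sub>R w) + norm (x *\<^sub>R v)) \<le> e * (h * (2 * norm v + norm w))"
      using e by (simp add: mult_left_mono)
    then have "\<bar>g (p + h *\<^sub>R w + x *\<^sub>R v) - g (p + x *\<^sub>R v) - h * g' w\<bar> \<le> e * (h * (2 * norm v + norm w))"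
      using err1 err2 lin_step by (simp add: abs_le_iff algebra_simps)
    then have "\<bar>h * (g (p + h *\<^sub>R w + x *\<^sub>R v) - g (p + x *\<^sub>R v) - h * g' w)\<bar> \<le> h * (e * (h * (2 * norm v + norm w)))"
      using h by (simp add: abs_mult mult_left_mono)
    moreover have "f (p + h *\<^sub>R v + h *\<^sub>R w) - f (p + h *\<^sub>R w) - f (p + h *\<^sub>R v) + f p - h\<^sup>2 * g' w
        = h * (g (p + h *\<^sub>R w + x *\<^sub>R v) - g (p + x *\<^sub>R v) - h * g' w)"
      using mvt by (simp add: algebra_simps power2_eq_square)
    ultimately show "\<bar>f (p + h *\<^sub>R v + h *\<^sub>R w) - f (p + h *\<^sub>R w) - f (p + h *\<^sub>R v) + f p
      - h\<^sup>2 * partial_along (partial_along f v) w p\<bar> \<le> e * h\<^sup>2 * (2 * norm v + norm w)"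
      unfolding g'_def g_def by (simp add: power2_eq_square mult_ac)
  qed
qed

text \<open>Schwarz's theorem: since the second difference is symmetric in v and w, both second
  derivatives are its limit, hence they agree.\<close>
lemma symmetry_of_second_derivatives:
  fixes f :: "'a::real_normed_vector \<Rightarrow> real"
  assumes S: "open S" "p \<in> S" and df: "\<And>q. q \<in> S \<Longrightarrow> f differentiable at q"
    and dv: "partial_along f v differentiable at p" and dw: "partial_along f w differentiable at p"
  shows "partial_along (partial_along f v) w p = partial_along (partial_along f w) v p"
proof (rule ccontr)
  define B where "B = partial_along (partial_along f v) w p"
  define B' where "B' = partial_along (partial_along f w) v p"
  define C where "C = 3 * (norm v + norm w) + 1"
  assume "partial_along (partial_along f v) w p \<noteq> partial_along (partial_along f w) v p"
  then have pos: "\<bar>B - B'\<bar> > 0" unfolding B_def B'_def by simp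
  have C: "C > 0" unfolding C_def by (simp add: add_nonneg_pos)
  define e where "e = \<bar>B - B'\<bar> / (2 * C)"
  have e: "e > 0" unfolding e_def using pos C by simp
  obtain d1 where d1: "d1 > 0" "\<And>h. 0 < h \<Longrightarrow> h < d1 \<Longrightarrow>
      \<bar>f (p + h *\<^sub>R v + h *\<^sub>R w) - f (p + h *\<^sub>R w) - f (p + h *\<^sub>R v) + f p - h\<^sup>2 * B\<bar>
        \<le> e * h\<^sup>2 * (2 * norm v + norm w)"
    using mixed_difference_estimate[OF S df dv e, of w] unfolding B_def by blast
  obtain d2 where d2: "d2 > 0" "\<And>h. 0 < h \<Longrightarrow> h < d2 \<Longrightarrow>
      \<bar>f (p + h *\<^sub>R w + h *\<^sub>R v) - f (p + h *\<^sub>R v) - f (p + h *\<^sub>R w) + f p - h\<^sup>2 * B'\<bar>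
        \<le> e * h\<^sup>2 * (2 * norm w + norm v)"
    using mixed_difference_estimate[OF S df dw e, of v] unfolding B'_def by blast
  define h where "h = min d1 d2 / 2"
  have h: "0 < h" "h < d1" "h < d2" unfolding h_def using d1 d2 by auto
  have "\<bar>h\<^sup>2 * B - h\<^sup>2 * B'\<bar> \<le> e * h\<^sup>2 * (3 * (norm v + norm w))"
    using d1(2)[OF h(1,2)] d2(2)[OF h(1,3)] by (simp add: abs_le_iff algebra_simps)
  then have "h\<^sup>2 * \<bar>B - B'\<bar> \<le> e * h\<^sup>2 * (3 * (norm v + norm w))"
    by (simp add: abs_mult flip: right_diff_distrib)
  also have "\<dots> < e * h\<^sup>2 * C" using e h unfolding C_def by simp
  also have "\<dots> = h\<^sup>2 * (\<bar>B - B'\<bar> / 2)" unfolding e_def using C by simp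
  finally show False using h pos by simp
qed

text \<open>The same for vector-valued maps, by testing against arbitrary vectors.\<close>
lemma symmetry_of_second_derivatives_vector:
  fixes f :: "'a::real_normed_vector \<Rightarrow> 'b::real_inner"
  assumes S: "open S" "p \<in> S" and df: "\<And>q. q \<in> S \<Longrightarrow> f differentiable at q"
    and dv: "partial_along f v differentiable at p" and dw: "partial_along f w differentiable at p"
  shows "partial_along (partial_along f v) w p = partial_along (partial_along f w) v p"
proof -
  have component: "partial_along (partial_along f v) w p \<bullet> c = partial_along (partial_along f w) v p \<bullet> c"
    for c
  proof -
    define g where "g = (\<lambda>q. f q \<bullet> c)"
    have g_along: "partial_along g u q = partial_along f u q \<bullet> c" if "q \<in> S" for u q
      unfolding g_def using partial_along_inner[OF df[OF that] differentiable_const[of c]]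
      by (simp add: partial_along_const)
    have along_g: "partial_along (\<lambda>q. partial_along f u q \<bullet> c) u' p = partial_along (partial_along f u) u' p \<bullet> c"
      if "partial_along f u differentiable at p" for u u'
      using partial_along_inner[OF that differentiable_const[of c]] by (simp add: partial_along_const)
    have second: "partial_along (partial_along g u) u' p = partial_along (partial_along f u) u' p \<bullet> c"
      if "partial_along f u differentiable at p" for u u'
      using partial_along_cong[OF S, of "partial_along g u" "\<lambda>q. partial_along f u q \<bullet> c"] g_along
        along_g[OF that] by simp
    have dg: "partial_along g u differentiable at p" if "partial_along f u differentiable at p" for u
      by (rule differentiable_cong[OF S, of "\<lambda>q. partial_along f u q \<bullet> c"]) (use g_along that in auto)
    have "partial_along (partial_along g v) w p = partial_along (partial_along g w) v p"
      by (rule symmetry_of_second_derivatives[OF S _ dg[OF dv] dg[OF dw]])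
        (use df in \<open>simp add: g_def\<close>)
    then show ?thesis using second[OF dv] second[OF dw] by simp
  qed
  have "(partial_along (partial_along f v) w p - partial_along (partial_along f w) v p) \<bullet>
        (partial_along (partial_along f v) w p - partial_along (partial_along f w) v p) = 0"
    using component by (simp add: inner_diff_left)
  then show ?thesis by simp
qed

lemma mixed_partials_commute:
  fixes f :: "real \<times> real \<Rightarrow> 'b::real_inner"
  assumes "open S" "p \<in> S" "\<And>q. q \<in> S \<Longrightarrow> f differentiable at q"
    and "pu f differentiable at p" "pv f differentiable at p"
  shows "pv (pu f) p = pu (pv f) p"
  using symmetry_of_second_derivatives_vector[OF assms[unfolded pu_eq_partial_along pv_eq_partial_along]]
  unfolding pu_eq_partial_along pv_eq_partial_along .


lemma span2_coeffs:
  fixes X a b :: "'a::real_vector"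
  assumes "X \<in> span {a, b}"
  obtains s t where "X = s *\<^sub>R a + t *\<^sub>R b"
proof -
  from assms obtain k where "X - k *\<^sub>R a \<in> span {b}" unfolding span_insert by auto
  then obtain c where "X - k *\<^sub>R a = c *\<^sub>R b" unfolding span_singleton by auto
  then have "X = k *\<^sub>R a + c *\<^sub>R b" by (simp add: algebra_simps)
  then show ?thesis using that by blast
qed

lemma orthogonal_span2:
  fixes n :: "'a::real_inner"
  assumes "n \<bullet> a = 0" "n \<bullet> b = 0" "X \<in> span {a, b}"
  shows "n \<bullet> X = 0"
  using assms by (elim span2_coeffs) (simp add: inner_add_right)

lemma coords_unique:
  fixes u v :: "'a::real_inner"
  assumes W: "(u\<bullet>u)*(v\<bullet>v) - (u\<bullet>v)^2 > 0"
    and eq: "s *\<^sub>R u + t *\<^sub>R v = s' *\<^sub>R u + t' *\<^sub>R v"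
  shows "s = s' \<and> t = t'"
proof -
  have "(s - s') *\<^sub>R u + (t - t') *\<^sub>R v = 0" using eq by (simp add: algebra_simps)
  then have e1: "(s - s') * (u\<bullet>u) + (t - t') * (u\<bullet>v) = 0"
        and e2: "(s - s') * (u\<bullet>v) + (t - t') * (v\<bullet>v) = 0"
    by (metis inner_add_left inner_scaleR_left inner_zero_left inner_commute)+
  have "(s - s') * ((u\<bullet>u)*(v\<bullet>v) - (u\<bullet>v)^2) = (v\<bullet>v) * ((s - s') * (u\<bullet>u) + (t - t') * (u\<bullet>v)) - (u\<bullet>v) * ((s - s') * (u\<bullet>v) + (t - t') * (v\<bullet>v))"
    by (simp add: algebra_simps power2_eq_square)
  then have A: "s - s' = 0" using e1 e2 W by simp
  have "(t - t') * ((u\<bullet>u)*(v\<bullet>v) - (u\<bullet>v)^2) = (u\<bullet>u) * ((s - s') * (u\<bullet>v) + (t - t') * (v\<bullet>v)) - (u\<bullet>v) * ((s - s') * (u\<bullet>u) + (t - t') * (u\<bullet>v))"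
    by (simp add: algebra_simps power2_eq_square)
  then have "t - t' = 0" using e1 e2 W by simp
  with A show ?thesis by simp
qed

lemma orthonormal_expansion4:
  fixes u1 u2 u3 u4 w :: "real^4"
  assumes o: "u1\<bullet>u1=1" "u2\<bullet>u2=1" "u3\<bullet>u3=1" "u4\<bullet>u4=1" "u1\<bullet>u2=0" "u1\<bullet>u3=0" "u1\<bullet>u4=0"
    "u2\<bullet>u3=0" "u2\<bullet>u4=0" "u3\<bullet>u4=0"
  shows "w = (w\<bullet>u1) *\<^sub>R u1 + (w\<bullet>u2) *\<^sub>R u2 + (w\<bullet>u3) *\<^sub>R u3 + (w\<bullet>u4) *\<^sub>R u4"
proof -
  define B where "B = {u1,u2,u3,u4}"
  have ne: "u1 \<noteq> u2" "u1 \<noteq> u3" "u1 \<noteq> u4" "u2 \<noteq> u3" "u2 \<noteq> u4" "u3 \<noteq> u4"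
    using o by (metis inner_commute zero_neq_one)+
  have nz: "0 \<notin> B" using o unfolding B_def by auto
  have po: "pairwise orthogonal B" unfolding B_def pairwise_def orthogonal_def
    using o by (auto simp: inner_commute)
  have ind: "independent B" by (rule pairwise_orthogonal_independent[OF po nz])
  have cB: "card B = 4" unfolding B_def using ne by auto
  have "UNIV \<subseteq> span B"
    using card_eq_dim[of B UNIV] ind cB unfolding B_def by auto
  define r where "r = w - ((w\<bullet>u1) *\<^sub>R u1 + (w\<bullet>u2) *\<^sub>R u2 + (w\<bullet>u3) *\<^sub>R u3 + (w\<bullet>u4) *\<^sub>R u4)"
  have oc: "u2\<bullet>u1=0" "u3\<bullet>u1=0" "u4\<bullet>u1=0" "u3\<bullet>u2=0" "u4\<bullet>u2=0" "u4\<bullet>u3=0"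
    using o by (simp_all add: inner_commute)
  have orth: "orthogonal r y" if "y \<in> B" for y
    using that o oc unfolding B_def r_def orthogonal_def
    by (auto simp: inner_diff_left inner_add_left)
  have "orthogonal r r"
    by (rule orthogonal_to_span[of r B r]) (use \<open>UNIV \<subseteq> span B\<close> orth in auto)
  then have "r = 0" unfolding orthogonal_def by simp
  then show ?thesis unfolding r_def by simp
qed

lemma orthonormal_inner4:
  fixes u1 u2 u3 u4 v w :: "real^4"
  assumes o: "u1\<bullet>u1=1" "u2\<bullet>u2=1" "u3\<bullet>u3=1" "u4\<bullet>u4=1" "u1\<bullet>u2=0" "u1\<bullet>u3=0" "u1\<bullet>u4=0"
    "u2\<bullet>u3=0" "u2\<bullet>u4=0" "u3\<bullet>u4=0"
  shows "v \<bullet> w = (v\<bullet>u1) * (w\<bullet>u1) + (v\<bullet>u2) * (w\<bullet>u2) + (v\<bullet>u3) * (w\<bullet>u3) + (v\<bullet>u4) * (w\<bullet>u4)"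
proof -
  have "v \<bullet> w = v \<bullet> ((w\<bullet>u1) *\<^sub>R u1 + (w\<bullet>u2) *\<^sub>R u2 + (w\<bullet>u3) *\<^sub>R u3 + (w\<bullet>u4) *\<^sub>R u4)"
    using orthonormal_expansion4[OF o, of w] by metis
  then show ?thesis by (simp add: inner_add_right)
qed

lemma det_4x4:
  "det (A::'a::comm_ring_1^4^4) =
    A$1$1 * A$2$2 * A$3$3 * A$4$4 - A$1$1 * A$2$2 * A$3$4 * A$4$3
  - A$1$1 * A$2$3 * A$3$2 * A$4$4 + A$1$1 * A$2$3 * A$3$4 * A$4$2
  + A$1$1 * A$2$4 * A$3$2 * A$4$3 - A$1$1 * A$2$4 * A$3$3 * A$4$2
  - A$1$2 * A$2$1 * A$3$3 * A$4$4 + A$1$2 * A$2$1 * A$3$4 * A$4$3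
  + A$1$2 * A$2$3 * A$3$1 * A$4$4 - A$1$2 * A$2$3 * A$3$4 * A$4$1
  - A$1$2 * A$2$4 * A$3$1 * A$4$3 + A$1$2 * A$2$4 * A$3$3 * A$4$1
  + A$1$3 * A$2$1 * A$3$2 * A$4$4 - A$1$3 * A$2$1 * A$3$4 * A$4$2
  - A$1$3 * A$2$2 * A$3$1 * A$4$4 + A$1$3 * A$2$2 * A$3$4 * A$4$1
  + A$1$3 * A$2$4 * A$3$1 * A$4$2 - A$1$3 * A$2$4 * A$3$2 * A$4$1
  - A$1$4 * A$2$1 * A$3$2 * A$4$3 + A$1$4 * A$2$1 * A$3$3 * A$4$2
  + A$1$4 * A$2$2 * A$3$1 * A$4$3 - A$1$4 * A$2$2 * A$3$3 * A$4$1
  - A$1$4 * A$2$3 * A$3$1 * A$4$2 + A$1$4 * A$2$3 * A$3$2 * A$4$1"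
proof -
  have f1: "finite {2::4, 3, 4}" "1 \<notin> {2::4, 3, 4}" by auto
  have f2: "finite {3::4, 4}" "2 \<notin> {3::4, 4}" by auto
  have f3: "finite {4::4}" "3 \<notin> {4::4}" by auto
  have U: "(UNIV::4 set) = {1,2,3,4}" by (rule UNIV_4)
  show ?thesis
    unfolding det_def U
    unfolding sum_over_permutations_insert[OF f1]
    unfolding sum_over_permutations_insert[OF f2]
    unfolding sum_over_permutations_insert[OF f3]
    unfolding permutes_sing
    by (simp add: sign_swap_id permutation_swap_id sign_compose permutation_compose sign_id swap_id_eq algebra_simps)
qed

lemma vector4_nth [simp]:
  "(vector [a,b,c,d] :: 'a::zero^4) $ 1 = a" "(vector [a,b,c,d] :: 'a^4) $ 2 = b"
  "(vector [a,b,c,d] :: 'a^4) $ 3 = c" "(vector [a,b,c,d] :: 'a^4) $ 4 = d"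
  by (simp_all add: vector_def)

text \<open>Changing the tangent and the normal pair of a frame by 2x2 matrices multiplies the
  determinant by the product of their determinants; this relates the two orientation conditions.\<close>
lemma det_frame_change:
  fixes zu zv e1 e2 :: "real^4"
  shows "det (vector [a1 *\<^sub>R zu + a2 *\<^sub>R zv, b1 *\<^sub>R zu + b2 *\<^sub>R zv, t11 *\<^sub>R e1 + t12 *\<^sub>R e2, t21 *\<^sub>R e1 + t22 *\<^sub>R e2] :: real^4^4)
    = (a1*b2 - a2*b1) * (t11*t22 - t12*t21) * det (vector [zu, zv, e1, e2] :: real^4^4)"
proof -
  define M :: "real^4^4" where "M = vector [vector [a1,a2,0,0], vector [b1,b2,0,0], vector [0,0,t11,t12], vector [0,0,t21,t22]]"
  have "(vector [a1 *\<^sub>R zu + a2 *\<^sub>R zv, b1 *\<^sub>R zu + b2 *\<^sub>R zv, t11 *\<^sub>R e1 + t12 *\<^sub>R e2, t21 *\<^sub>R e1 + t22 *\<^sub>R e2] :: real^4^4)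
     = M ** vector [zu, zv, e1, e2]"
    unfolding M_def by (simp add: vec_eq_iff forall_4 matrix_matrix_mult_def sum_4)
  moreover have "det M = (a1*b2 - a2*b1) * (t11*t22 - t12*t21)"
    unfolding M_def det_4x4 by (simp add: algebra_simps)
  ultimately show ?thesis by (simp add: det_mul)
qed

lemma normal_part_orthonormal:
  assumes sx: "x0 \<in> span {pu z q, pv z q}" and sy: "y0 \<in> span {pu z q, pv z q}"
    and o: "x0\<bullet>x0=1" "y0\<bullet>y0=1" "f1\<bullet>f1=1" "f2\<bullet>f2=1" "x0\<bullet>y0=0" "x0\<bullet>f1=0" "x0\<bullet>f2=0"
    "y0\<bullet>f1=0" "y0\<bullet>f2=0" "f1\<bullet>f2=0"
    and nf: "f1 \<bullet> pu z q = 0" "f1 \<bullet> pv z q = 0" "f2 \<bullet> pu z q = 0" "f2 \<bullet> pv z q = 0"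
  shows "normal_part z q w = (w\<bullet>f1) *\<^sub>R f1 + (w\<bullet>f2) *\<^sub>R f2"
  unfolding normal_part_def
proof (rule the_equality)
  let ?n = "(w\<bullet>f1) *\<^sub>R f1 + (w\<bullet>f2) *\<^sub>R f2"
  have ex: "w = (w\<bullet>x0) *\<^sub>R x0 + (w\<bullet>y0) *\<^sub>R y0 + (w\<bullet>f1) *\<^sub>R f1 + (w\<bullet>f2) *\<^sub>R f2"
    by (rule orthonormal_expansion4[OF o])
  have "w - ?n = (w\<bullet>x0) *\<^sub>R x0 + (w\<bullet>y0) *\<^sub>R y0"
  proof -
    have "w = ((w\<bullet>x0) *\<^sub>R x0 + (w\<bullet>y0) *\<^sub>R y0) + ?n" using ex by (simp only: add.assoc)
    then show ?thesis by (metis add_diff_cancel_right')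
  qed
  moreover have "(w\<bullet>x0) *\<^sub>R x0 + (w\<bullet>y0) *\<^sub>R y0 \<in> span {pu z q, pv z q}"
    by (intro span_add span_scale sx sy)
  moreover have "?n \<bullet> pu z q = 0" "?n \<bullet> pv z q = 0" using nf by (simp_all add: inner_add_left)
  ultimately show "?n \<bullet> pu z q = 0 \<and> ?n \<bullet> pv z q = 0 \<and> w - ?n \<in> span {pu z q, pv z q}" by simp
  fix n assume n: "n \<bullet> pu z q = 0 \<and> n \<bullet> pv z q = 0 \<and> w - n \<in> span {pu z q, pv z q}"
  have "n - ?n = (w - ?n) - (w - n)" by simp
  then have sp: "n - ?n \<in> span {pu z q, pv z q}"
    using n \<open>w - ?n = _\<close> \<open>(w\<bullet>x0) *\<^sub>R x0 + (w\<bullet>y0) *\<^sub>R y0 \<in> span {pu z q, pv z q}\<close>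
    by (metis span_diff)
  have "(n - ?n) \<bullet> pu z q = 0" "(n - ?n) \<bullet> pv z q = 0" using n nf by (simp_all add: inner_diff_left inner_add_left)
  then have "(n - ?n) \<bullet> (n - ?n) = 0" using orthogonal_span2 sp by blast
  then show "n = ?n" by simp
qed

lemma smooth_on_differentiable:
  assumes "smooth_on D f" "q \<in> D"
  shows "f differentiable at q" "pu f differentiable at q" "pv f differentiable at q"
proof -
  have "iter_partial bs f differentiable at q" for bs using assms unfolding smooth_on_def by blast
  from this[of "[]"] this[of "[True]"] this[of "[False]"]
  show "f differentiable at q" "pu f differentiable at q" "pv f differentiable at q" by simp_all
qed

lemma tcoords_eq:
  assumes W: "EE z q * GG z q - (FF z q)^2 > 0" and X: "X q = s *\<^sub>R pu z q + t *\<^sub>R pv z q"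
  shows "tcoords z X q = (s,t)"
  unfolding tcoords_def
proof (rule the_equality)
  show "X q = tvec z q (s,t)" using X by (simp add: tvec_def)
  fix ab assume "X q = tvec z q ab"
  then have "fst ab *\<^sub>R pu z q + snd ab *\<^sub>R pv z q = s *\<^sub>R pu z q + t *\<^sub>R pv z q" using X by (simp add: tvec_def)
  then have "fst ab = s \<and> snd ab = t"
    by (rule coords_unique[rotated]) (use W in \<open>simp add: EE_def GG_def FF_def\<close>)
  then show "ab = (s,t)" by (cases ab) simp
qed

lemma tcoords_span:
  assumes W: "EE z q * GG z q - (FF z q)^2 > 0" and X: "X q \<in> span {pu z q, pv z q}"
  shows "X q = fst (tcoords z X q) *\<^sub>R pu z q + snd (tcoords z X q) *\<^sub>R pv z q"
proof -
  obtain s t where st: "X q = s *\<^sub>R pu z q + t *\<^sub>R pv z q" using X by (elim span2_coeffs)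
  show ?thesis using tcoords_eq[where X=X and q=q and z=z, OF W st] st by simp
qed

lemma tcoords_formula:
  assumes W: "EE z q * GG z q - (FF z q)^2 > 0" and X: "X q \<in> span {pu z q, pv z q}"
  shows "fst (tcoords z X q) = (GG z q * (X q \<bullet> pu z q) - FF z q * (X q \<bullet> pv z q)) / (EE z q * GG z q - (FF z q)^2)"
    "snd (tcoords z X q) = (EE z q * (X q \<bullet> pv z q) - FF z q * (X q \<bullet> pu z q)) / (EE z q * GG z q - (FF z q)^2)"
proof -
  define s where "s = fst (tcoords z X q)"
  define t where "t = snd (tcoords z X q)"
  have e: "X q = s *\<^sub>R pu z q + t *\<^sub>R pv z q" using tcoords_span[where X=X and q=q and z=z, OF W X] unfolding s_def t_def .
  have i1: "X q \<bullet> pu z q = s * EE z q + t * FF z q" unfolding e EE_def FF_def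
    by (simp add: inner_add_left inner_add_right inner_commute)
  have i2: "X q \<bullet> pv z q = s * FF z q + t * GG z q" unfolding e GG_def FF_def
    by (simp add: inner_add_left inner_add_right inner_commute)
  show "fst (tcoords z X q) = (GG z q * (X q \<bullet> pu z q) - FF z q * (X q \<bullet> pv z q)) / (EE z q * GG z q - (FF z q)^2)"
    unfolding s_def[symmetric] i1 i2 using W by (simp add: field_simps power2_eq_square)
  show "snd (tcoords z X q) = (EE z q * (X q \<bullet> pv z q) - FF z q * (X q \<bullet> pu z q)) / (EE z q * GG z q - (FF z q)^2)"
    unfolding t_def[symmetric] i1 i2 using W by (simp add: field_simps power2_eq_square)
qed

lemma tcoords_differentiable:
  assumes D: "open D" "p \<in> D" and W: "\<And>q. q \<in> D \<Longrightarrow> EE z q * GG z q - (FF z q)^2 > 0"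
    and X: "\<And>q. q \<in> D \<Longrightarrow> X q \<in> span {pu z q, pv z q}"
    and dX: "X differentiable at p" and du: "pu z differentiable at p" and dv: "pv z differentiable at p"
  shows "(\<lambda>r. fst (tcoords z X r)) differentiable at p" "(\<lambda>r. snd (tcoords z X r)) differentiable at p"
proof -
  have den: "pu z p \<bullet> pu z p * (pv z p \<bullet> pv z p) - (pu z p \<bullet> pv z p)^2 \<noteq> 0"
    using W[OF D(2)] unfolding EE_def FF_def GG_def by simp
  have d1: "(\<lambda>r. (GG z r * (X r \<bullet> pu z r) - FF z r * (X r \<bullet> pv z r)) / (EE z r * GG z r - (FF z r)^2))
      differentiable at p"
    and d2: "(\<lambda>r. (EE z r * (X r \<bullet> pv z r) - FF z r * (X r \<bullet> pu z r)) / (EE z r * GG z r - (FF z r)^2))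
      differentiable at p"
    unfolding EE_def FF_def GG_def using den dX du dv
    by (intro differentiable_divide differentiable_diff differentiable_mult differentiable_inner
        differentiable_power; simp)+
  have eq: "fst (tcoords z X r) = (GG z r * (X r \<bullet> pu z r) - FF z r * (X r \<bullet> pv z r)) / (EE z r * GG z r - (FF z r)^2)"
      "snd (tcoords z X r) = (EE z r * (X r \<bullet> pv z r) - FF z r * (X r \<bullet> pu z r)) / (EE z r * GG z r - (FF z r)^2)"
    if "r \<in> D" for r
    using tcoords_formula[of z r X, OF W[OF that] X[OF that]] by simp_all
  show "(\<lambda>r. fst (tcoords z X r)) differentiable at p"
    by (rule differentiable_cong[OF D _ d1]) (simp add: eq)
  show "(\<lambda>r. snd (tcoords z X r)) differentiable at p"
    by (rule differentiable_cong[OF D _ d2]) (simp add: eq)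
qed

lemma inner_constant_partials:
  assumes S: "open S" "q \<in> S" and const: "\<And>r. r \<in> S \<Longrightarrow> f r \<bullet> g r = c"
    and df: "f differentiable at q" and dg: "g differentiable at q"
  shows "pu f q \<bullet> g q = - (f q \<bullet> pu g q)" "pv f q \<bullet> g q = - (f q \<bullet> pv g q)"
proof -
  have "pu (\<lambda>r. f r \<bullet> g r) q = pu (\<lambda>r. c) q" by (rule pu_cong[OF S]) (simp add: const)
  moreover have "pv (\<lambda>r. f r \<bullet> g r) q = pv (\<lambda>r. c) q" by (rule pv_cong[OF S]) (simp add: const)
  ultimately
  show "pu f q \<bullet> g q = - (f q \<bullet> pu g q)" "pv f q \<bullet> g q = - (f q \<bullet> pv g q)"
    using pu_rules(4)[OF df dg] pv_rules(4)[OF df dg] by (simp_all add: pu_rules(5) pv_rules(5))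
qed

lemma varkappa_frame_change:
  assumes npart: "\<And>w. normal_part z q w = (w \<bullet> f1) *\<^sub>R f1 + (w \<bullet> f2) *\<^sub>R f2"
    and on: "f1 \<bullet> f1 = 1" "f2 \<bullet> f2 = 1" "f1 \<bullet> f2 = 0"
  shows "varkappa z q e1 e2 = ((f1 \<bullet> e1) * (f2 \<bullet> e2) - (f1 \<bullet> e2) * (f2 \<bullet> e1)) * varkappa z q f1 f2"
proof -
  define \<epsilon> where "\<epsilon> = (f1 \<bullet> e1) * (f2 \<bullet> e2) - (f1 \<bullet> e2) * (f2 \<bullet> e1)"
  have on': "f2 \<bullet> f1 = 0" using on by (simp add: inner_commute)
  have "Delta1 z q e1 e2 = \<epsilon> * Delta1 z q f1 f2" "Delta2 z q e1 e2 = \<epsilon> * Delta2 z q f1 f2"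
    "Delta3 z q e1 e2 = \<epsilon> * Delta3 z q f1 f2"
    unfolding Delta1_def Delta2_def Delta3_def cc_def sigma11_def sigma12_def sigma22_def npart \<epsilon>_def
    using on on' by (simp_all add: inner_add_left algebra_simps)
  then show ?thesis
    unfolding varkappa_def LL_def MM_def NN_def \<epsilon>_def[symmetric]
    by (simp add: algebra_simps add_divide_distrib diff_divide_distrib)
qed

text \<open>The coordinate formula for the exterior derivative of the 1-form alpha du + beta dv:
  X(omega(Y)) - Y(omega(X)) - omega([X,Y]) = (X1 Y2 - X2 Y1)(beta_u - alpha_v).\<close>
lemma one_form_exterior_derivative:
  fixes a1 a2 b1 b2 \<alpha> \<beta> :: "real \<times> real \<Rightarrow> real"
  assumes d: "a1 differentiable at p" "a2 differentiable at p" "b1 differentiable at p"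
    "b2 differentiable at p" "\<alpha> differentiable at p" "\<beta> differentiable at p"
  defines "\<omega>x \<equiv> \<lambda>r. a1 r * \<alpha> r + a2 r * \<beta> r" and "\<omega>y \<equiv> \<lambda>r. b1 r * \<alpha> r + b2 r * \<beta> r"
  shows "(a1 p * pu \<omega>y p + a2 p * pv \<omega>y p) - (b1 p * pu \<omega>x p + b2 p * pv \<omega>x p)
      - ((a1 p * pu b1 p + a2 p * pv b1 p - (b1 p * pu a1 p + b2 p * pv a1 p)) * \<alpha> p
         + (a1 p * pu b2 p + a2 p * pv b2 p - (b1 p * pu a2 p + b2 p * pv a2 p)) * \<beta> p)
    = (a1 p * b2 p - a2 p * b1 p) * (pu \<beta> p - pv \<alpha> p)"
proof -
  have "pu \<omega>x p = a1 p * pu \<alpha> p + pu a1 p * \<alpha> p + (a2 p * pu \<beta> p + pu a2 p * \<beta> p)"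
    "pv \<omega>x p = a1 p * pv \<alpha> p + pv a1 p * \<alpha> p + (a2 p * pv \<beta> p + pv a2 p * \<beta> p)"
    "pu \<omega>y p = b1 p * pu \<alpha> p + pu b1 p * \<alpha> p + (b2 p * pu \<beta> p + pu b2 p * \<beta> p)"
    "pv \<omega>y p = b1 p * pv \<alpha> p + pv b1 p * \<alpha> p + (b2 p * pv \<beta> p + pv b2 p * \<beta> p)"
    unfolding \<omega>x_def \<omega>y_def using d by (simp_all add: pu_rules pv_rules)
  then show ?thesis by (simp add: algebra_simps)
qed

text \<open>If (a1,a2) and (b1,b2) are orthonormal for the form E, F, G, their Gram matrix inverts it.\<close>
lemma inverse_gram:
  fixes a1 a2 b1 b2 E F G :: real
  assumes o1: "a1^2*E + 2*a1*a2*F + a2^2*G = 1" and o2: "b1^2*E + 2*b1*b2*F + b2^2*G = 1"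
    and o3: "a1*b1*E + (a1*b2+a2*b1)*F + a2*b2*G = 0"
  shows "a1^2+b1^2 = G*(a1*b2-a2*b1)^2" "a1*a2+b1*b2 = -F*(a1*b2-a2*b1)^2" "a2^2+b2^2 = E*(a1*b2-a2*b1)^2"
    and "(a1*b2-a2*b1)^2 * (E*G - F^2) = 1"
proof -
  show "a1^2+b1^2 = G*(a1*b2-a2*b1)^2" "a1*a2+b1*b2 = -F*(a1*b2-a2*b1)^2" "a2^2+b2^2 = E*(a1*b2-a2*b1)^2"
    using assms by algebra+
  have "(a1*b2-a2*b1)^2 * (E*G - F^2) = (a1^2*E + 2*a1*a2*F + a2^2*G) * (b1^2*E + 2*b1*b2*F + b2^2*G)
      - (a1*b1*E + (a1*b2+a2*b1)*F + a2*b2*G)^2"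
    by algebra
  then show "(a1*b2-a2*b1)^2 * (E*G - F^2) = 1" using assms by simp
qed

locale surface_with_frame =
  fixes D :: "(real \<times> real) set" and z x y n1 n2 :: "real \<times> real \<Rightarrow> real^4"
  assumes surf: "regular_surface D z"
    and smooth: "smooth_on D x" "smooth_on D y" "smooth_on D n1" "smooth_on D n2"
    and tangent: "\<forall>q\<in>D. x q \<in> span {pu z q, pv z q} \<and> y q \<in> span {pu z q, pv z q}"
    and normal: "\<forall>q\<in>D. n1 q \<bullet> pu z q = 0 \<and> n1 q \<bullet> pv z q = 0 \<and> n2 q \<bullet> pu z q = 0 \<and> n2 q \<bullet> pv z q = 0"
    and orthonormal: "\<forall>q\<in>D. x q \<bullet> x q = 1 \<and> y q \<bullet> y q = 1 \<and> n1 q \<bullet> n1 q = 1 \<and> n2 q \<bullet> n2 q = 1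
          \<and> x q \<bullet> y q = 0 \<and> x q \<bullet> n1 q = 0 \<and> x q \<bullet> n2 q = 0 \<and> y q \<bullet> n1 q = 0
          \<and> y q \<bullet> n2 q = 0 \<and> n1 q \<bullet> n2 q = 0"
begin

lemma open_domain: "open D"
  and smooth_z: "smooth_on D z"
  and gram_pos: "q \<in> D \<Longrightarrow> EE z q * GG z q - (FF z q)^2 > 0"
  using surf unfolding regular_surface_def by auto

lemma frame_orthonormal:
  assumes "q \<in> D"
  shows "x q \<bullet> x q = 1" "y q \<bullet> y q = 1" "n1 q \<bullet> n1 q = 1" "n2 q \<bullet> n2 q = 1"
    "x q \<bullet> y q = 0" "x q \<bullet> n1 q = 0" "x q \<bullet> n2 q = 0" "y q \<bullet> n1 q = 0"
    "y q \<bullet> n2 q = 0" "n1 q \<bullet> n2 q = 0"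
  using orthonormal assms by auto

lemma frame_normal:
  assumes "q \<in> D"
  shows "n1 q \<bullet> pu z q = 0" "n1 q \<bullet> pv z q = 0" "n2 q \<bullet> pu z q = 0" "n2 q \<bullet> pv z q = 0"
  using normal assms by auto

lemma frame_tangent:
  assumes "q \<in> D"
  shows "x q \<in> span {pu z q, pv z q}" "y q \<in> span {pu z q, pv z q}"
  using tangent assms by auto

lemmas differentiable_z = smooth_on_differentiable[OF smooth_z]
  and differentiable_n1 = smooth_on_differentiable[OF smooth(3)]
  and differentiable_n2 = smooth_on_differentiable[OF smooth(4)]

text \<open>Components of the tangent frame in the coordinate frame z_u, z_v, and the
  factor by which x \<and> y differs from z_u \<and> z_v.\<close>
definition a1 where "a1 = (\<lambda>q. fst (tcoords z x q))"
definition a2 where "a2 = (\<lambda>q. snd (tcoords z x q))"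
definition b1 where "b1 = (\<lambda>q. fst (tcoords z y q))"
definition b2 where "b2 = (\<lambda>q. snd (tcoords z y q))"
definition frame_area where "frame_area q = a1 q * b2 q - a2 q * b1 q"

lemma frame_coords:
  assumes "q \<in> D"
  shows "x q = a1 q *\<^sub>R pu z q + a2 q *\<^sub>R pv z q" "y q = b1 q *\<^sub>R pu z q + b2 q *\<^sub>R pv z q"
  unfolding a1_def a2_def b1_def b2_def
  using tcoords_span[of z q x, OF gram_pos[OF assms] frame_tangent(1)[OF assms]]
    tcoords_span[of z q y, OF gram_pos[OF assms] frame_tangent(2)[OF assms]] by simp_all

lemma frame_coords_differentiable:
  assumes "p \<in> D"
  shows "a1 differentiable at p" "a2 differentiable at p" "b1 differentiable at p" "b2 differentiable at p"
proof -
  have "(\<lambda>r. fst (tcoords z X r)) differentiable at p \<and> (\<lambda>r. snd (tcoords z X r)) differentiable at p"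
    if "smooth_on D X" "\<And>q. q \<in> D \<Longrightarrow> X q \<in> span {pu z q, pv z q}" for X
    using tcoords_differentiable[OF open_domain assms gram_pos that(2)]
      smooth_on_differentiable(1)[OF that(1) assms] differentiable_z(2,3)[OF assms] by blast
  from this[OF smooth(1) frame_tangent(1)] this[OF smooth(2) frame_tangent(2)]
  show "a1 differentiable at p" "a2 differentiable at p" "b1 differentiable at p" "b2 differentiable at p"
    unfolding a1_def a2_def b1_def b2_def by auto
qed

text \<open>Since x, y are orthonormal, their coordinates invert the first fundamental form.\<close>
lemma frame_gram:
  assumes "q \<in> D"
  shows "(a1 q)^2 + (b1 q)^2 = GG z q * (frame_area q)^2"
    "a1 q * a2 q + b1 q * b2 q = - FF z q * (frame_area q)^2"
    "(a2 q)^2 + (b2 q)^2 = EE z q * (frame_area q)^2"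
    "(frame_area q)^2 * (EE z q * GG z q - (FF z q)^2) = 1"
proof -
  note on = frame_orthonormal[OF assms] and xy = frame_coords[OF assms]
  have "(a1 q)^2 * EE z q + 2 * a1 q * a2 q * FF z q + (a2 q)^2 * GG z q = 1"
    "(b1 q)^2 * EE z q + 2 * b1 q * b2 q * FF z q + (b2 q)^2 * GG z q = 1"
    "a1 q * b1 q * EE z q + (a1 q * b2 q + a2 q * b1 q) * FF z q + a2 q * b2 q * GG z q = 0"
    using on(1,2,5) unfolding xy EE_def FF_def GG_def
    by (simp_all add: inner_add_left inner_add_right inner_commute power2_eq_square algebra_simps)
  from inverse_gram[OF this] show "(a1 q)^2 + (b1 q)^2 = GG z q * (frame_area q)^2"
    "a1 q * a2 q + b1 q * b2 q = - FF z q * (frame_area q)^2"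
    "(a2 q)^2 + (b2 q)^2 = EE z q * (frame_area q)^2"
    "(frame_area q)^2 * (EE z q * GG z q - (FF z q)^2) = 1"
    unfolding frame_area_def by simp_all
qed

lemma normal_part_frame:
  assumes "q \<in> D"
  shows "normal_part z q w = (w \<bullet> n1 q) *\<^sub>R n1 q + (w \<bullet> n2 q) *\<^sub>R n2 q"
  using normal_part_orthonormal[OF frame_tangent[OF assms] frame_orthonormal[OF assms] frame_normal[OF assms]] .

lemma normal_part_coeffs:
  assumes q: "q \<in> D"
  shows "normal_part z q w \<bullet> n1 q = n1 q \<bullet> w" "normal_part z q w \<bullet> n2 q = n2 q \<bullet> w"
proof -
  note on = frame_orthonormal[OF q]
  have n21: "n2 q \<bullet> n1 q = 0" using on by (simp add: inner_commute)
  have "normal_part z q w \<bullet> n1 q = (w \<bullet> n1 q) * (n1 q \<bullet> n1 q) + (w \<bullet> n2 q) * (n2 q \<bullet> n1 q)"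
    "normal_part z q w \<bullet> n2 q = (w \<bullet> n1 q) * (n1 q \<bullet> n2 q) + (w \<bullet> n2 q) * (n2 q \<bullet> n2 q)"
    unfolding normal_part_frame[OF q] by (simp_all add: inner_add_left)
  then show "normal_part z q w \<bullet> n1 q = n1 q \<bullet> w" "normal_part z q w \<bullet> n2 q = n2 q \<bullet> w"
    using on n21 by (simp_all add: inner_commute)
qed

lemma unit_normal_derivatives:
  assumes "q \<in> D"
  shows "pu n1 q \<bullet> n1 q = 0" "pv n1 q \<bullet> n1 q = 0" "pu n2 q \<bullet> n2 q = 0" "pv n2 q \<bullet> n2 q = 0"
proof -
  have "pu n q \<bullet> n q = 0 \<and> pv n q \<bullet> n q = 0"
    if "\<And>r. r \<in> D \<Longrightarrow> n r \<bullet> n r = 1" "n differentiable at q" for n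
    using inner_constant_partials[OF open_domain assms, of n n 1] that by (simp add: inner_commute)
  then show "pu n1 q \<bullet> n1 q = 0" "pv n1 q \<bullet> n1 q = 0" "pu n2 q \<bullet> n2 q = 0" "pv n2 q \<bullet> n2 q = 0"
    using frame_orthonormal differentiable_n1(1)[OF assms] differentiable_n2(1)[OF assms] by blast+
qed

text \<open>Coefficients of the normal connection form omega = g(D n2, n1) in the coordinates u, v.\<close>
definition conn_u where "conn_u q = pu n2 q \<bullet> n1 q"
definition conn_v where "conn_v q = pv n2 q \<bullet> n1 q"

text \<open>Since n2 is a unit field, D_X n2 = omega(X) n1, with omega = conn_u du + conn_v dv.\<close>
lemma normal_conn_n2:
  assumes "q \<in> D"
  shows "normal_conn z X n2 q = (fst (tcoords z X q) * conn_u q + snd (tcoords z X q) * conn_v q) *\<^sub>R n1 q"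
  unfolding normal_conn_def dirder_def normal_part_frame[OF assms] conn_u_def conn_v_def
  using unit_normal_derivatives[OF assms] by (simp add: inner_add_left)

lemma normal_conn_along_n1:
  assumes p: "p \<in> D" and V: "\<And>r. r \<in> D \<Longrightarrow> V r = \<omega> r *\<^sub>R n1 r" and d\<omega>: "\<omega> differentiable at p"
  shows "normal_conn z X V p \<bullet> n1 p = fst (tcoords z X p) * pu \<omega> p + snd (tcoords z X p) * pv \<omega> p"
proof -
  note dn1 = differentiable_n1(1)[OF p]
  have "pu V p = \<omega> p *\<^sub>R pu n1 p + pu \<omega> p *\<^sub>R n1 p"
    using pu_cong[OF open_domain p V] pu_rules(3)[OF d\<omega> dn1] by simp
  moreover have "pv V p = \<omega> p *\<^sub>R pv n1 p + pv \<omega> p *\<^sub>R n1 p"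
    using pv_cong[OF open_domain p V] pv_rules(3)[OF d\<omega> dn1] by simp
  ultimately show ?thesis
    unfolding normal_conn_def dirder_def normal_part_frame[OF p]
    using frame_orthonormal[OF p] unit_normal_derivatives[OF p]
    by (simp add: inner_add_left inner_add_right inner_commute)
qed

text \<open>The normal curvature is the exterior derivative of the connection form:
  g(R(x,y)n2, n1) = x(omega(y)) - y(omega(x)) - omega([x,y]).\<close>
lemma normal_curvature_connection_form:
  assumes p: "p \<in> D"
  shows "normal_curv z x y n2 p \<bullet> n1 p = frame_area p * (pu conn_v p - pv conn_u p)"
proof -
  note da = frame_coords_differentiable[OF p]
  have dconn: "conn_u differentiable at p" "conn_v differentiable at p"
    unfolding conn_u_def conn_v_def
    using differentiable_n1(1)[OF p] differentiable_n2(2,3)[OF p] by simp_all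
  define \<omega>x where "\<omega>x = (\<lambda>r. a1 r * conn_u r + a2 r * conn_v r)"
  define \<omega>y where "\<omega>y = (\<lambda>r. b1 r * conn_u r + b2 r * conn_v r)"
  have d\<omega>: "\<omega>x differentiable at p" "\<omega>y differentiable at p"
    unfolding \<omega>x_def \<omega>y_def using da dconn by simp_all
  have "normal_conn z x (normal_conn z y n2) p \<bullet> n1 p = a1 p * pu \<omega>y p + a2 p * pv \<omega>y p"
    using normal_conn_along_n1[OF p _ d\<omega>(2)] normal_conn_n2
    unfolding \<omega>y_def a1_def a2_def b1_def b2_def by simp
  moreover have "normal_conn z y (normal_conn z x n2) p \<bullet> n1 p = b1 p * pu \<omega>x p + b2 p * pv \<omega>x p"
    using normal_conn_along_n1[OF p _ d\<omega>(1)] normal_conn_n2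
    unfolding \<omega>x_def a1_def a2_def b1_def b2_def by simp
  moreover have "tcoords z (lie_bracket z x y) p =
      (a1 p * pu b1 p + a2 p * pv b1 p - (b1 p * pu a1 p + b2 p * pv a1 p),
       a1 p * pu b2 p + a2 p * pv b2 p - (b1 p * pu a2 p + b2 p * pv a2 p))"
    by (rule tcoords_eq[OF gram_pos[OF p]])
      (simp add: lie_bracket_def dirder_def a1_def a2_def b1_def b2_def)
  then have "normal_conn z (lie_bracket z x y) n2 p \<bullet> n1 p =
      (a1 p * pu b1 p + a2 p * pv b1 p - (b1 p * pu a1 p + b2 p * pv a1 p)) * conn_u p
      + (a1 p * pu b2 p + a2 p * pv b2 p - (b1 p * pu a2 p + b2 p * pv a2 p)) * conn_v p"
    using normal_conn_n2[OF p] frame_orthonormal(3)[OF p] by simp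
  ultimately show ?thesis
    unfolding normal_curv_def inner_diff_left frame_area_def
    using one_form_exterior_derivative[OF da dconn] unfolding \<omega>x_def \<omega>y_def by simp
qed

text \<open>By symmetry of the mixed partials of n2, only first derivatives of the normals remain.\<close>
lemma connection_form_curl:
  assumes p: "p \<in> D"
  shows "pu conn_v p - pv conn_u p = pv n2 p \<bullet> pu n1 p - pu n2 p \<bullet> pv n1 p"
proof -
  note dn1 = differentiable_n1(1)[OF p] and dn2 = differentiable_n2[OF p]
  have "pv (pu n2) p = pu (pv n2) p"
    by (rule mixed_partials_commute[OF open_domain p differentiable_n2(1) dn2(2,3)])
  then show ?thesis
    unfolding conn_u_def conn_v_def
    using pu_rules(4)[OF dn2(3) dn1] pv_rules(4)[OF dn2(2) dn1] by (simp add: inner_commute)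
qed

lemma weingarten:
  assumes p: "p \<in> D" and n: "n = n1 \<or> n = n2"
  shows "pu n p \<bullet> pu z p = - (n p \<bullet> pu (pu z) p)" "pv n p \<bullet> pu z p = - (n p \<bullet> pu (pv z) p)"
    "pu n p \<bullet> pv z p = - (n p \<bullet> pu (pv z) p)" "pv n p \<bullet> pv z p = - (n p \<bullet> pv (pv z) p)"
proof -
  note dz = differentiable_z[OF p]
  have sym_z: "pv (pu z) p = pu (pv z) p"
    by (rule mixed_partials_commute[OF open_domain p differentiable_z(1) dz(2,3)])
  have dn: "n differentiable at p" using n differentiable_n1(1)[OF p] differentiable_n2(1)[OF p] by auto
  have "\<And>r. r \<in> D \<Longrightarrow> n r \<bullet> pu z r = 0" "\<And>r. r \<in> D \<Longrightarrow> n r \<bullet> pv z r = 0"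
    using n frame_normal by auto
  from inner_constant_partials[OF open_domain p this(1) dn dz(2)]
    inner_constant_partials[OF open_domain p this(2) dn dz(3)]
  show "pu n p \<bullet> pu z p = - (n p \<bullet> pu (pu z) p)" "pv n p \<bullet> pu z p = - (n p \<bullet> pu (pv z) p)"
    "pu n p \<bullet> pv z p = - (n p \<bullet> pu (pv z) p)" "pv n p \<bullet> pv z p = - (n p \<bullet> pv (pv z) p)"
    using sym_z by simp_all
qed

text \<open>Expanding in the frame x, y and using the Weingarten relations, the pairing of the
  derivatives of n1 and n2 is a quadratic form in the coefficients of sigma in the frame n1, n2.\<close>
lemma normal_derivative_pairing:
  assumes p: "p \<in> D"
  shows "pv n2 p \<bullet> pu n1 p - pu n2 p \<bullet> pv n1 p =
      ((a1 p)^2 + (b1 p)^2) * Delta1 z p (n1 p) (n2 p)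
      + (a1 p * a2 p + b1 p * b2 p) * Delta2 z p (n1 p) (n2 p)
      + ((a2 p)^2 + (b2 p)^2) * Delta3 z p (n1 p) (n2 p)"
proof -
  note on = frame_orthonormal[OF p]
  note w1 = weingarten[OF p disjI1[OF refl]] and w2 = weingarten[OF p disjI2[OF refl]]
  have expand: "pv n2 p \<bullet> pu n1 p = (pv n2 p \<bullet> x p) * (pu n1 p \<bullet> x p) + (pv n2 p \<bullet> y p) * (pu n1 p \<bullet> y p)"
    "pu n2 p \<bullet> pv n1 p = (pu n2 p \<bullet> x p) * (pv n1 p \<bullet> x p) + (pu n2 p \<bullet> y p) * (pv n1 p \<bullet> y p)"
    using orthonormal_inner4[OF on, of "pv n2 p" "pu n1 p"] orthonormal_inner4[OF on, of "pu n2 p" "pv n1 p"]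
      unit_normal_derivatives[OF p] by simp_all
  show ?thesis
    unfolding expand Delta1_def Delta2_def Delta3_def cc_def sigma11_def sigma12_def sigma22_def
      frame_coords[OF p]
    using w1 w2 by (simp add: normal_part_coeffs[OF p] inner_add_right algebra_simps power2_eq_square)
qed

text \<open>Hence the normal curvature is varkappa computed in the frame n1, n2, up to the sign of
  the area factor d, because d^2 (E G - F^2) = 1, i.e. W = 1 / |d|.\<close>
lemma normal_curvature_eq_varkappa:
  assumes p: "p \<in> D"
  shows "normal_curv z x y n2 p \<bullet> n1 p = sgn (frame_area p) * varkappa z p (n1 p) (n2 p)"
proof -
  define d where "d = frame_area p"
  define K where "K = GG z p * Delta1 z p (n1 p) (n2 p) - FF z p * Delta2 z p (n1 p) (n2 p)
      + EE z p * Delta3 z p (n1 p) (n2 p)"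
  note gram = frame_gram[OF p, folded d_def]
  have "d \<noteq> 0" using gram(4) by auto
  then have gram_inv: "EE z p * GG z p - (FF z p)^2 = 1 / d^2"
    using gram(4) by (simp add: eq_divide_eq mult.commute)
  then have W: "WW z p = 1 / \<bar>d\<bar>"
    unfolding WW_def by (simp add: real_sqrt_divide)
  have "normal_curv z x y n2 p \<bullet> n1 p = d * d^2 * K"
    unfolding normal_curvature_connection_form[OF p] connection_form_curl[OF p]
      normal_derivative_pairing[OF p] gram(1-3)[unfolded d_def] K_def d_def
    by (simp add: algebra_simps)
  also have "\<dots> = sgn d * (\<bar>d\<bar> * d^2 * K)"
    by (simp add: sgn_mult_abs[symmetric] mult.assoc)
  also have "\<bar>d\<bar> * d^2 * K = varkappa z p (n1 p) (n2 p)"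
    unfolding varkappa_def LL_def MM_def NN_def W gram_inv K_def
    using \<open>d \<noteq> 0\<close> by (simp add: field_simps)
  finally show ?thesis unfolding d_def .
qed

lemma normal_frame_change:
  assumes p: "p \<in> D" and frame: "adapted_normal_frame z p e1 e2"
  shows "n1 p = (n1 p \<bullet> e1) *\<^sub>R e1 + (n1 p \<bullet> e2) *\<^sub>R e2" "n2 p = (n2 p \<bullet> e1) *\<^sub>R e1 + (n2 p \<bullet> e2) *\<^sub>R e2"
    and "((n1 p \<bullet> e1) * (n2 p \<bullet> e2) - (n1 p \<bullet> e2) * (n2 p \<bullet> e1))^2 = 1"
proof -
  note on = frame_orthonormal[OF p]
  have fr: "e1 \<bullet> e1 = 1" "e2 \<bullet> e2 = 1" "e1 \<bullet> e2 = 0" "e1 \<bullet> pu z p = 0" "e1 \<bullet> pv z p = 0"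
     "e2 \<bullet> pu z p = 0" "e2 \<bullet> pv z p = 0"
    using frame unfolding adapted_normal_frame_def by auto
  have "x p \<bullet> e1 = 0" "x p \<bullet> e2 = 0" "y p \<bullet> e1 = 0" "y p \<bullet> e2 = 0"
    using orthogonal_span2[OF fr(4,5) frame_tangent(1)[OF p]] orthogonal_span2[OF fr(6,7) frame_tangent(1)[OF p]]
      orthogonal_span2[OF fr(4,5) frame_tangent(2)[OF p]] orthogonal_span2[OF fr(6,7) frame_tangent(2)[OF p]]
    by (simp_all add: inner_commute)
  then have basis: "x p \<bullet> x p = 1" "y p \<bullet> y p = 1" "e1 \<bullet> e1 = 1" "e2 \<bullet> e2 = 1" "x p \<bullet> y p = 0"
      "x p \<bullet> e1 = 0" "x p \<bullet> e2 = 0" "y p \<bullet> e1 = 0" "y p \<bullet> e2 = 0" "e1 \<bullet> e2 = 0"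
    using on fr by simp_all
  define T11 T12 T21 T22 where "T11 = n1 p \<bullet> e1" and "T12 = n1 p \<bullet> e2"
    and "T21 = n2 p \<bullet> e1" and "T22 = n2 p \<bullet> e2"
  have n_in_e: "n1 p = T11 *\<^sub>R e1 + T12 *\<^sub>R e2" "n2 p = T21 *\<^sub>R e1 + T22 *\<^sub>R e2"
    using orthonormal_expansion4[OF basis, of "n1 p"] orthonormal_expansion4[OF basis, of "n2 p"] on
    unfolding T11_def T12_def T21_def T22_def by (simp_all add: inner_commute)
  then show "n1 p = (n1 p \<bullet> e1) *\<^sub>R e1 + (n1 p \<bullet> e2) *\<^sub>R e2" "n2 p = (n2 p \<bullet> e1) *\<^sub>R e1 + (n2 p \<bullet> e2) *\<^sub>R e2"
    unfolding T11_def T12_def T21_def T22_def .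
  have e21: "e2 \<bullet> e1 = 0" using fr(3) by (simp add: inner_commute)
  have "n1 p \<bullet> n1 p = T11^2 + T12^2" "n2 p \<bullet> n2 p = T21^2 + T22^2" "n1 p \<bullet> n2 p = T11 * T21 + T12 * T22"
    unfolding n_in_e by (simp_all add: inner_add_left inner_add_right fr e21 power2_eq_square)
  then have "T11^2 + T12^2 = 1" "T21^2 + T22^2 = 1" "T11 * T21 + T12 * T22 = 0" using on by simp_all
  moreover have "(T11 * T22 - T12 * T21)^2 = (T11^2 + T12^2) * (T21^2 + T22^2) - (T11 * T21 + T12 * T22)^2"
    by algebra
  ultimately show "((n1 p \<bullet> e1) * (n2 p \<bullet> e2) - (n1 p \<bullet> e2) * (n2 p \<bullet> e1))^2 = 1"
    unfolding T11_def T12_def T21_def T22_def by simp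
qed

lemma frame_change_sign:
  assumes p: "p \<in> D" and frame: "adapted_normal_frame z p e1 e2"
    and oriented: "pos_oriented (x p) (y p) (n1 p) (n2 p)"
  shows "(n1 p \<bullet> e1) * (n2 p \<bullet> e2) - (n1 p \<bullet> e2) * (n2 p \<bullet> e1) = sgn (frame_area p)"
proof -
  define T11 T12 T21 T22 where "T11 = n1 p \<bullet> e1" and "T12 = n1 p \<bullet> e2"
    and "T21 = n2 p \<bullet> e1" and "T22 = n2 p \<bullet> e2"
  have change: "n1 p = T11 *\<^sub>R e1 + T12 *\<^sub>R e2" "n2 p = T21 *\<^sub>R e1 + T22 *\<^sub>R e2"
    "(T11 * T22 - T12 * T21)^2 = 1"
    using normal_frame_change[OF p frame] unfolding T11_def T12_def T21_def T22_def .
  have "det (vector [x p, y p, n1 p, n2 p] :: real^4^4) =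
      det (vector [a1 p *\<^sub>R pu z p + a2 p *\<^sub>R pv z p, b1 p *\<^sub>R pu z p + b2 p *\<^sub>R pv z p,
        T11 *\<^sub>R e1 + T12 *\<^sub>R e2, T21 *\<^sub>R e1 + T22 *\<^sub>R e2] :: real^4^4)"
    by (simp only: frame_coords[OF p] change(1,2))
  also have "\<dots> = frame_area p * (T11 * T22 - T12 * T21) * det (vector [pu z p, pv z p, e1, e2] :: real^4^4)"
    unfolding frame_area_def by (rule det_frame_change)
  finally have "frame_area p * (T11 * T22 - T12 * T21) > 0"
    using oriented frame unfolding pos_oriented_def adapted_normal_frame_def
    by (simp add: zero_less_mult_iff)
  with change(3) have "T11 * T22 - T12 * T21 = sgn (frame_area p)"
    by (auto simp: power2_eq_1_iff sgn_real_def zero_less_mult_iff)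
  then show ?thesis unfolding T11_def T12_def T21_def T22_def .
qed

end

theorem proposition3p4:
  fixes D :: "(real \<times> real) set" and z x y n1 n2 :: "real \<times> real \<Rightarrow> real^4"
    and p :: "real \<times> real" and e1 e2 :: "real^4"
  assumes surf: "regular_surface D z"
    and minimal: "minimal_surface D z"
    and smooth: "smooth_on D x" "smooth_on D y" "smooth_on D n1" "smooth_on D n2"
    and tangent: "\<forall>q\<in>D. x q \<in> span {pu z q, pv z q} \<and> y q \<in> span {pu z q, pv z q}"
    and normal: "\<forall>q\<in>D. n1 q \<bullet> pu z q = 0 \<and> n1 q \<bullet> pv z q = 0 \<and> n2 q \<bullet> pu z q = 0 \<and> n2 q \<bullet> pv z q = 0"
    and orthonormal: "\<forall>q\<in>D. x q \<bullet> x q = 1 \<and> y q \<bullet> y q = 1 \<and> n1 q \<bullet> n1 q = 1 \<and> n2 q \<bullet> n2 q = 1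
          \<and> x q \<bullet> y q = 0 \<and> x q \<bullet> n1 q = 0 \<and> x q \<bullet> n2 q = 0 \<and> y q \<bullet> n1 q = 0
          \<and> y q \<bullet> n2 q = 0 \<and> n1 q \<bullet> n2 q = 0"
    and oriented: "\<forall>q\<in>D. pos_oriented (x q) (y q) (n1 q) (n2 q)"
    and p: "p \<in> D"
    and frame: "adapted_normal_frame z p e1 e2"
  shows "varkappa z p e1 e2 = normal_curv z x y n2 p \<bullet> n1 p"
proof -
  interpret surface_with_frame D z x y n1 n2
    by (rule surface_with_frame.intro[OF surf smooth tangent normal orthonormal])
  have "varkappa z p e1 e2 =
      ((n1 p \<bullet> e1) * (n2 p \<bullet> e2) - (n1 p \<bullet> e2) * (n2 p \<bullet> e1)) * varkappa z p (n1 p) (n2 p)"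
    by (rule varkappa_frame_change[OF normal_part_frame[OF p] frame_orthonormal(3,4,10)[OF p]])
  also have "\<dots> = sgn (frame_area p) * varkappa z p (n1 p) (n2 p)"
    using frame_change_sign[OF p frame] oriented p by simp
  also have "\<dots> = normal_curv z x y n2 p \<bullet> n1 p"
    by (rule normal_curvature_eq_varkappa[OF p, symmetric])
  finally show ?thesis .
qed

end
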